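(* Let $\mathcal{D}=\{z_1,\dots,z_n\}$, let $\mathcal{F}$ be a hypothesis class, $\ell:\mathcal{F}\times\mathcal{Z}\to\mathbb{R}_{\ge0}$ a loss with empirical risk $L(f;\mathcal{D})=\sum_{i=1}^n\ell(f;z_i)$, and let $\varepsilon\in(0,1)$. Let $\bar s_1,\dots,\bar s_n$ be any numbers with $\bar s_i\ge s_i$ for all $i$, where $s_i$ are the sensitivities. Let $\pi$ be a permutation of $\{1,\dots,n\}$ with $\bar s_{\pi(1)}\le\dots\le\bar s_{\pi(n)}$, let $\varepsilon'=\frac{2\varepsilon}{1+\varepsilon}$, let $m$ be the largest integer in $\{0,\dots,n\}$ with $\sum_{j=1}^m\bar s_{\pi(j)}\le\varepsilon'$, let $U=\{\pi(1),\dots,\pi(m)\}$, $S=\{1,\dots,n\}\setminus U$, $T_U=\sum_{i\in U}\bar s_i$, and $\alpha=\sqrt{\frac{1-\varepsilon^2}{1-T_U}}$. Then for every $f\in\mathcal{F}$, \[ (1-\varepsilon)L(f;\mathcal{D})\le \sum_{i\in S}\alpha\,\ell(f;z_i)\le (1+\varepsilon)L(f;\mathcal{D}), \] i.e. $(S,\{\alpha\}_{i\in S})$ is a $(1\pm\varepsilon)$-coreset.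
   Context: The sensitivity of point $i$ is $s_i \coloneqq \sup_{f\in\mathcal{F},\ L(f;\mathcal{D})>0} \frac{\ell(f;z_i)}{L(f;\mathcal{D})}$ (taken to be $0$ if no $f$ has $L(f;\mathcal{D})>0$). A weighted subset $(S,\{\alpha_i\}_{i\in S})$ is a $(1\pm\varepsilon)$-coreset if $(1-\varepsilon)L(f;\mathcal{D})\le\sum_{i\in S}\alpha_i\ell(f;z_i)\le(1+\varepsilon)L(f;\mathcal{D})$ for all $f\in\mathcal{F}$. *)

theory Defs
  imports Complex_Main
begin

definition emp_risk :: "('f \<Rightarrow> 'z \<Rightarrow> real) \<Rightarrow> (nat \<Rightarrow> 'z) \<Rightarrow> nat \<Rightarrow> 'f \<Rightarrow> real" where
  "emp_risk loss z n f = (\<Sum>i=1..n. loss f (z i))"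

definition sensitivity :: "'f set \<Rightarrow> ('f \<Rightarrow> 'z \<Rightarrow> real) \<Rightarrow> (nat \<Rightarrow> 'z) \<Rightarrow> nat \<Rightarrow> nat \<Rightarrow> real" where
  "sensitivity F loss z n i =
     (if {f \<in> F. emp_risk loss z n f > 0} = {} then 0
      else (SUP f \<in> {f \<in> F. emp_risk loss z n f > 0}. loss f (z i) / emp_risk loss z n f))"

end

theory Submission
  imports Defs
begin

text \<open>Every point of U has loss at most its sensitivity bound times the empirical risk L, so
  the points of S carry between (1 - T) L and L of the risk, where T is the sum of the bounds
  over U. The weight \<open>\<alpha> = sqrt ((1 - \<epsilon>^2) / (1 - T))\<close> is the geometric mean of the
  largest admissible factor 1 + \<epsilon> and the smallest sufficient factor (1 - \<epsilon>) / (1 - T);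
  both bounds hold because these two factors are ordered correctly, which is exactly the
  condition T \<le> 2\<epsilon> / (1 + \<epsilon>).\<close>

lemma emp_risk_nonneg:
  assumes "\<And>x. loss f x \<ge> 0"
  shows "emp_risk loss z n f \<ge> 0"
  unfolding emp_risk_def using assms by (simp add: sum_nonneg)

lemma loss_le_emp_risk:
  assumes "\<And>x. loss f x \<ge> 0" and "i \<in> {1..n}"
  shows "loss f (z i) \<le> emp_risk loss z n f"
  unfolding emp_risk_def using assms by (intro member_le_sum) auto

lemma loss_le_sensitivity_mult_emp_risk:
  assumes nonneg: "\<And>f x. loss f x \<ge> 0" and i: "i \<in> {1..n}" and f: "f \<in> F"
  shows "loss f (z i) \<le> sensitivity F loss z n i * emp_risk loss z n f"
proof (cases "emp_risk loss z n f > 0")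
  case True
  let ?A = "{f \<in> F. emp_risk loss z n f > 0}"
  have "bdd_above ((\<lambda>f. loss f (z i) / emp_risk loss z n f) ` ?A)"
  proof (rule bdd_aboveI2[where M = 1])
    fix g assume "g \<in> ?A"
    then show "loss g (z i) / emp_risk loss z n g \<le> 1"
      using loss_le_emp_risk[of loss g, OF nonneg i] by simp
  qed
  moreover have "f \<in> ?A" using f True by simp
  ultimately have "loss f (z i) / emp_risk loss z n f \<le> sensitivity F loss z n i"
    unfolding sensitivity_def by (auto intro: cSUP_upper)
  then show ?thesis using True by (simp add: divide_le_eq)
next
  case False
  then have "emp_risk loss z n f = 0" using emp_risk_nonneg[of loss f z n, OF nonneg] by linarith
  then show ?thesis using loss_le_emp_risk[of loss f, OF nonneg i, where z = z] nonneg[of f "z i"] by simp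
qed

lemma sum_loss_le_sum_bound_mult_emp_risk:
  assumes nonneg: "\<And>f x. loss f x \<ge> 0" and U: "U \<subseteq> {1..n}"
    and bound: "\<And>i. i \<in> U \<Longrightarrow> sensitivity F loss z n i \<le> sbar i" and f: "f \<in> F"
  shows "(\<Sum>i\<in>U. loss f (z i)) \<le> (\<Sum>i\<in>U. sbar i) * emp_risk loss z n f"
proof -
  have "(\<Sum>i\<in>U. loss f (z i)) \<le> (\<Sum>i\<in>U. sbar i * emp_risk loss z n f)"
  proof (rule sum_mono)
    fix i assume "i \<in> U"
    then have "loss f (z i) \<le> sensitivity F loss z n i * emp_risk loss z n f"
      using U f by (intro loss_le_sensitivity_mult_emp_risk[OF nonneg]) auto
    also have "\<dots> \<le> sbar i * emp_risk loss z n f"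
      using bound[OF \<open>i \<in> U\<close>] emp_risk_nonneg[of loss f z n, OF nonneg] by (rule mult_right_mono)
    finally show "loss f (z i) \<le> sbar i * emp_risk loss z n f" .
  qed
  then show ?thesis by (simp add: sum_distrib_right)
qed

lemma sqrt_reweighting_bounds:
  fixes \<epsilon> T :: real
  assumes eps: "0 < \<epsilon>" "\<epsilon> < 1" and T: "T \<le> 2 * \<epsilon> / (1 + \<epsilon>)"
  defines "\<alpha> \<equiv> sqrt ((1 - \<epsilon>^2) / (1 - T))"
  shows "T < 1" and "1 - \<epsilon> \<le> \<alpha> * (1 - T)" and "\<alpha> \<le> 1 + \<epsilon>"
proof -
  have key: "1 - \<epsilon> \<le> (1 + \<epsilon>) * (1 - T)"
    using T eps by (simp add: pos_le_divide_eq algebra_simps)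
  then have "0 < (1 + \<epsilon>) * (1 - T)" using eps by linarith
  then show T1: "T < 1" using eps by (simp add: zero_less_mult_iff)
  have "(1 - \<epsilon>)^2 \<le> (1 - \<epsilon>) * ((1 + \<epsilon>) * (1 - T))"
    using key eps by (simp add: power2_eq_square mult_left_mono)
  also have "\<dots> = (1 - \<epsilon>^2) / (1 - T) * (1 - T)^2"
    using T1 by (simp add: power2_eq_square field_simps)
  finally have "sqrt ((1 - \<epsilon>)^2) \<le> sqrt ((1 - \<epsilon>^2) / (1 - T) * (1 - T)^2)"
    by (rule real_sqrt_le_mono)
  then show "1 - \<epsilon> \<le> \<alpha> * (1 - T)"
    using eps T1 by (simp only: \<alpha>_def real_sqrt_mult real_sqrt_abs)
  have "(1 - \<epsilon>^2) / (1 - T) = (1 - \<epsilon>) / (1 - T) * (1 + \<epsilon>)"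
    by (simp add: power2_eq_square algebra_simps)
  also have "\<dots> \<le> (1 + \<epsilon>) * (1 + \<epsilon>)"
    using key T1 eps by (intro mult_right_mono) (simp_all add: divide_le_eq mult.commute)
  finally show "\<alpha> \<le> 1 + \<epsilon>"
    unfolding \<alpha>_def using eps by (intro real_le_lsqrt) (simp_all add: power2_eq_square)
qed

lemma coreset_by_dropping_low_sensitivity_points:
  fixes \<epsilon> :: real
  assumes nonneg: "\<And>f x. loss f x \<ge> 0" and eps: "0 < \<epsilon>" "\<epsilon> < 1"
    and U: "U \<subseteq> {1..n}" and bound: "\<And>i. i \<in> U \<Longrightarrow> sensitivity F loss z n i \<le> sbar i"
    and T: "(\<Sum>i\<in>U. sbar i) \<le> 2 * \<epsilon> / (1 + \<epsilon>)" and f: "f \<in> F"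
  defines "\<alpha> \<equiv> sqrt ((1 - \<epsilon>^2) / (1 - (\<Sum>i\<in>U. sbar i)))"
  shows "(1 - \<epsilon>) * emp_risk loss z n f \<le> (\<Sum>i\<in>{1..n} - U. \<alpha> * loss f (z i))
      \<and> (\<Sum>i\<in>{1..n} - U. \<alpha> * loss f (z i)) \<le> (1 + \<epsilon>) * emp_risk loss z n f"
proof -
  let ?T = "\<Sum>i\<in>U. sbar i" and ?L = "emp_risk loss z n f"
  let ?kept = "\<Sum>i\<in>{1..n} - U. loss f (z i)" and ?dropped = "\<Sum>i\<in>U. loss f (z i)"
  have T1: "?T < 1" and \<alpha>_lower: "1 - \<epsilon> \<le> \<alpha> * (1 - ?T)" and \<alpha>_upper: "\<alpha> \<le> 1 + \<epsilon>"
    using sqrt_reweighting_bounds[OF eps T] unfolding \<alpha>_def by auto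
  have \<alpha>_nonneg: "0 \<le> \<alpha>" unfolding \<alpha>_def using T1 eps by (simp add: power_le_one)
  have L_nonneg: "0 \<le> ?L" using emp_risk_nonneg[of loss f z n, OF nonneg] .
  have split: "?kept + ?dropped = ?L"
    unfolding emp_risk_def using sum.subset_diff[OF U, of "\<lambda>i. loss f (z i)"] by simp
  have dropped: "0 \<le> ?dropped" "?dropped \<le> ?T * ?L"
    using nonneg sum_loss_le_sum_bound_mult_emp_risk[of loss, OF nonneg U bound f]
    by (auto intro: sum_nonneg)
  have "(1 - \<epsilon>) * ?L \<le> \<alpha> * ((1 - ?T) * ?L)"
    using mult_right_mono[OF \<alpha>_lower L_nonneg] by (simp add: mult.assoc)
  also have "\<dots> \<le> \<alpha> * ?kept"
    using split dropped \<alpha>_nonneg by (intro mult_left_mono) (auto simp: algebra_simps)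
  finally have lower: "(1 - \<epsilon>) * ?L \<le> \<alpha> * ?kept" .
  have "\<alpha> * ?kept \<le> \<alpha> * ?L"
    using split dropped \<alpha>_nonneg by (intro mult_left_mono) auto
  also have "\<dots> \<le> (1 + \<epsilon>) * ?L"
    using \<alpha>_upper L_nonneg by (rule mult_right_mono)
  finally have upper: "\<alpha> * ?kept \<le> (1 + \<epsilon>) * ?L" .
  show ?thesis using lower upper by (simp add: sum_distrib_left)
qed

theorem theorem1:
  fixes n :: nat and z :: "nat \<Rightarrow> 'z" and F :: "'f set" and loss :: "'f \<Rightarrow> 'z \<Rightarrow> real"
    and \<epsilon> :: real and sbar :: "nat \<Rightarrow> real" and \<pi> :: "nat \<Rightarrow> nat"
    and \<epsilon>' :: real and m :: nat and U :: "nat set" and S :: "nat set" and T\<^sub>U :: real and \<alpha> :: real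
  assumes loss_nonneg: "\<And>f x. loss f x \<ge> 0"
    and eps: "0 < \<epsilon>" "\<epsilon> < 1"
    and sbar_ge: "\<And>i. i \<in> {1..n} \<Longrightarrow> sbar i \<ge> sensitivity F loss z n i"
    and perm: "bij_betw \<pi> {1..n} {1..n}"
    and sorted: "\<And>i j. 1 \<le> i \<Longrightarrow> i \<le> j \<Longrightarrow> j \<le> n \<Longrightarrow> sbar (\<pi> i) \<le> sbar (\<pi> j)"
    and eps'_def: "\<epsilon>' = 2 * \<epsilon> / (1 + \<epsilon>)"
    and m_def: "m = Max {k. k \<le> n \<and> (\<Sum>j=1..k. sbar (\<pi> j)) \<le> \<epsilon>'}"
    and U_def: "U = \<pi> ` {1..m}"
    and S_def: "S = {1..n} - U"
    and TU_def: "T\<^sub>U = (\<Sum>i\<in>U. sbar i)"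
    and alpha_def: "\<alpha> = sqrt ((1 - \<epsilon>^2) / (1 - T\<^sub>U))"
  shows "\<forall>f\<in>F. (1 - \<epsilon>) * emp_risk loss z n f \<le> (\<Sum>i\<in>S. \<alpha> * loss f (z i))
                \<and> (\<Sum>i\<in>S. \<alpha> * loss f (z i)) \<le> (1 + \<epsilon>) * emp_risk loss z n f"
proof -
  let ?K = "{k. k \<le> n \<and> (\<Sum>j=1..k. sbar (\<pi> j)) \<le> \<epsilon>'}"
  have "0 \<in> ?K" using eps eps'_def by simp
  moreover have "finite ?K" by (rule finite_subset[of _ "{..n}"]) auto
  ultimately have "m \<in> ?K" unfolding m_def by (intro Max_in) auto
  then have mn: "m \<le> n" and prefix_sum: "(\<Sum>j=1..m. sbar (\<pi> j)) \<le> \<epsilon>'" by auto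
  have U: "U \<subseteq> {1..n}" unfolding U_def using perm mn by (auto simp: bij_betw_def)
  have "inj_on \<pi> {1..m}"
    using perm mn by (auto simp: bij_betw_def intro: inj_on_subset)
  then have "T\<^sub>U = (\<Sum>j=1..m. sbar (\<pi> j))" unfolding TU_def U_def by (simp add: sum.reindex)
  then have T: "(\<Sum>i\<in>U. sbar i) \<le> 2 * \<epsilon> / (1 + \<epsilon>)"
    using prefix_sum eps'_def TU_def by simp
  have bound: "\<And>i. i \<in> U \<Longrightarrow> sensitivity F loss z n i \<le> sbar i"
    using U sbar_ge by blast
  show ?thesis unfolding S_def alpha_def TU_def
    using coreset_by_dropping_low_sensitivity_points[of loss, OF loss_nonneg eps U bound T] by blast
qed

end
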